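(* Let $T$ be a continuous linear operator on a topological vector space $X$ and let $\mathcal F$ be a block family. Then $T$ is $\mathcal F$-hypercyclic if and only if $T$ is hypercyclic and has the $\mathscr P_{\mathcal F}$ property.
   Context: $\mathbb N$ denotes the nonnegative integers. A Furstenberg family is a nonempty collection $\mathcal F\subseteq\mathcal P(\mathbb N)$ with $\emptyset\notin\mathcal F$ which is hereditarily upward ($A\in\mathcal F$, $A\subseteq B$ imply $B\in\mathcal F$). The block family $b\mathcal F$: $S\in b\mathcal F$ iff there is $F\in\mathcal F$ such that for every finite $R\subseteq F$ there is $n\in\mathbb N$ with $R+n\subseteq S$. A Furstenberg family $\mathcal F$ is called a block family if $b\mathcal F=\mathcal F$. For $x\in X$ and $U\subseteq X$, $N_T(x,U)=\{n\in\mathbb N:T^nx\in U\}$. $T$ is $\mathcal F$-hypercyclic if there is $x\in X$ with $N_T(x,U)\in\mathcal F$ for every nonempty open $U$; $T$ is hypercyclic if some $x$ has dense orbit $\{T^nx:n\in\mathbb N\}$. $T$ has the $\mathscr P_{\mathcal F}$ property if for every nonempty open set $U\subseteq X$ there is $x\in X$ with $N_T(x,U)\in\mathcal F$. *)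

theory Defs
  imports "HOL-Analysis.Analysis"
begin

text \<open>Real topological vector spaces: a topological abelian group with a real vector
  space structure for which scalar multiplication is jointly continuous
  (stated via neighbourhoods, i.e. continuity w.r.t. the product topology).
  (Complex topological vector spaces are in particular real ones.)\<close>
class real_topological_vector_space = topological_ab_group_add + real_vector +
  assumes continuous_scaleR_joint:
    "\<And>a x V. open V \<Longrightarrow> a *\<^sub>R x \<in> V \<Longrightarrow>
       \<exists>A W. open (A :: real set) \<and> open W \<and> a \<in> A \<and> x \<in> W \<and>
         (\<forall>b\<in>A. \<forall>y\<in>W. b *\<^sub>R y \<in> V)"

definition furstenberg_family :: "nat set set \<Rightarrow> bool" where
  "furstenberg_family \<F> \<longleftrightarrow> \<F> \<noteq> {} \<and> {} \<notin> \<F> \<and> (\<forall>A B. A \<in> \<F> \<and> A \<subseteq> B \<longrightarrow> B \<in> \<F>)"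

definition block_fam :: "nat set set \<Rightarrow> nat set set" where
  "block_fam \<F> = {S. \<exists>F\<in>\<F>. \<forall>R. finite R \<and> R \<subseteq> F \<longrightarrow> (\<exists>n. (\<lambda>r. r + n) ` R \<subseteq> S)}"

definition block_family :: "nat set set \<Rightarrow> bool" where
  "block_family \<F> \<longleftrightarrow> furstenberg_family \<F> \<and> block_fam \<F> = \<F>"

definition return_set :: "('a \<Rightarrow> 'a) \<Rightarrow> 'a \<Rightarrow> 'a set \<Rightarrow> nat set" where
  "return_set T x U = {n. (T ^^ n) x \<in> U}"

definition F_hypercyclic :: "nat set set \<Rightarrow> ('a::topological_space \<Rightarrow> 'a) \<Rightarrow> bool" where
  "F_hypercyclic \<F> T \<longleftrightarrow> (\<exists>x. \<forall>U. open U \<and> U \<noteq> {} \<longrightarrow> return_set T x U \<in> \<F>)"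

definition hypercyclic :: "('a::topological_space \<Rightarrow> 'a) \<Rightarrow> bool" where
  "hypercyclic T \<longleftrightarrow> (\<exists>x. closure (range (\<lambda>n. (T ^^ n) x)) = UNIV)"

definition P_F_property :: "nat set set \<Rightarrow> ('a::topological_space \<Rightarrow> 'a) \<Rightarrow> bool" where
  "P_F_property \<F> T \<longleftrightarrow> (\<forall>U. open U \<and> U \<noteq> {} \<longrightarrow> (\<exists>x. return_set T x U \<in> \<F>))"

end

theory Submission
  imports Defs
begin

text \<open>If the orbit of \<open>x\<close> meets every nonempty open set \<open>U\<close> in a set of the family, it is
  dense since \<open>{}\<close> is not in the family. Conversely, let the orbit of \<open>x\<close> be dense and
  \<open>N(y, U) \<in> \<F>\<close>. For a finite \<open>R \<subseteq> N(y, U)\<close> the set \<open>\<Inter>r\<in>R. T\<^sup>-\<^sup>r U\<close> is an open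
  neighbourhood of \<open>y\<close>, so some \<open>T\<^sup>n x\<close> lies in it, i.e. \<open>R + n \<subseteq> N(x, U)\<close>. Hence
  \<open>N(x, U) \<in> b\<F> = \<F>\<close>.\<close>

lemma continuous_on_funpow:
  fixes T :: "'a::topological_space \<Rightarrow> 'a"
  assumes "continuous_on UNIV T"
  shows "continuous_on UNIV (T ^^ n)"
proof (induction n)
  case 0
  then show ?case by (simp add: id_def)
next
  case (Suc n)
  then show ?case
    using assms by (simp add: continuous_on_compose2[of UNIV T UNIV "T ^^ n"])
qed

lemma return_set_funpow_shift:
  "(T ^^ r) ((T ^^ n) x) \<in> U \<Longrightarrow> r + n \<in> return_set T x U"
  by (simp add: return_set_def funpow_add)

lemma hypercyclic_if_F_hypercyclic:
  fixes T :: "'a::topological_space \<Rightarrow> 'a"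
  assumes "F_hypercyclic \<F> T" and "{} \<notin> \<F>"
  shows "hypercyclic T"
proof -
  obtain x where x: "\<And>U. open U \<Longrightarrow> U \<noteq> {} \<Longrightarrow> return_set T x U \<in> \<F>"
    using assms(1) unfolding F_hypercyclic_def by blast
  let ?orbit = "range (\<lambda>n. (T ^^ n) x)"
  have "closure ?orbit = UNIV"
  proof (rule ccontr)
    assume "closure ?orbit \<noteq> UNIV"
    then have "return_set T x (- closure ?orbit) \<in> \<F>"
      by (intro x) auto
    moreover have "return_set T x (- closure ?orbit) = {}"
      unfolding return_set_def by (auto intro: closure_subset[THEN subsetD])
    ultimately show False
      using assms(2) by simp
  qed
  then show ?thesis
    unfolding hypercyclic_def by blast
qed

lemma P_F_property_if_F_hypercyclic: "F_hypercyclic \<F> T \<Longrightarrow> P_F_property \<F> T"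
  unfolding F_hypercyclic_def P_F_property_def by blast

lemma return_set_in_block_fam:
  fixes T :: "'a::topological_space \<Rightarrow> 'a"
  assumes cont: "continuous_on UNIV T"
    and dense: "closure (range (\<lambda>n. (T ^^ n) x)) = UNIV"
    and "open U" and y: "return_set T y U \<in> \<F>"
  shows "return_set T x U \<in> block_fam \<F>"
  unfolding block_fam_def
proof (intro CollectI bexI[OF _ y] allI impI)
  fix R assume R: "finite R \<and> R \<subseteq> return_set T y U"
  define V where "V = (\<Inter>r\<in>R. (T ^^ r) -` U)"
  have "open V"
    unfolding V_def using R \<open>open U\<close> continuous_on_funpow[OF cont]
    by (intro open_INT) (auto intro!: open_vimage)
  moreover have "y \<in> V"
    using R unfolding V_def return_set_def by auto
  ultimately have "range (\<lambda>n. (T ^^ n) x) \<inter> V \<noteq> {}"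
    using dense closure_iff_nhds_not_empty[of y "range (\<lambda>n. (T ^^ n) x)"] by blast
  then obtain n where n: "(T ^^ n) x \<in> V"
    by blast
  have "(\<lambda>r. r + n) ` R \<subseteq> return_set T x U"
    using n unfolding V_def by (auto intro: return_set_funpow_shift)
  then show "\<exists>n. (\<lambda>r. r + n) ` R \<subseteq> return_set T x U" ..
qed

lemma F_hypercyclic_if_hypercyclic_P_F_property:
  fixes T :: "'a::topological_space \<Rightarrow> 'a"
  assumes cont: "continuous_on UNIV T" and block: "block_fam \<F> = \<F>"
    and "hypercyclic T" and P: "P_F_property \<F> T"
  shows "F_hypercyclic \<F> T"
proof -
  from \<open>hypercyclic T\<close> obtain x where dense: "closure (range (\<lambda>n. (T ^^ n) x)) = UNIV"
    unfolding hypercyclic_def ..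
  have "return_set T x U \<in> \<F>" if "open U" "U \<noteq> {}" for U
  proof -
    from P that obtain y where "return_set T y U \<in> \<F>"
      unfolding P_F_property_def by blast
    then have "return_set T x U \<in> block_fam \<F>"
      by (rule return_set_in_block_fam[OF cont dense \<open>open U\<close>])
    then show ?thesis
      unfolding block .
  qed
  then show ?thesis
    unfolding F_hypercyclic_def by (intro exI[of _ x]) blast
qed

theorem mainTheorem4:
  fixes T :: "'a::real_topological_vector_space \<Rightarrow> 'a" and \<F> :: "nat set set"
  assumes "linear T" and "continuous_on UNIV T" and "block_family \<F>"
  shows "F_hypercyclic \<F> T \<longleftrightarrow> hypercyclic T \<and> P_F_property \<F> T"
proof -
  have "{} \<notin> \<F>" and "block_fam \<F> = \<F>"
    using assms(3) unfolding block_family_def furstenberg_family_def by auto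
  then show ?thesis
    using hypercyclic_if_F_hypercyclic P_F_property_if_F_hypercyclic
      F_hypercyclic_if_hypercyclic_P_F_property[OF assms(2)] by metis
qed

end
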